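(* In the two-cut setting of the context, let $v,z\in\mathbb C$ with $v\ne z$, $v,z$ not poles of $h$ and not in $\mathcal L$. Let $\Omega_k,\Omega^{\varepsilon}_k$ denote the integrals below with all $u_\alpha$-contours equal to $\Gamma(\mathcal L)$ (enclosing $\mathcal L$ but not $v$, $z$ or other poles of $h$), and let $\Omega^{(v)}_k,\Omega^{\varepsilon(v)}_k$ denote the same integrals with all $u_\alpha$-contours equal to a contour $\Gamma^{(v)}(\mathcal L)$ enclosing $\mathcal L\cup\{v\}$ but not $z$ or other poles of $h$. Then $$\Omega_r(v,z)=\Omega^{(v)}_r(v,z)+r(z-v)h(v)\,\Omega^{+1}_{r-1}(v,z),$$ $$\Omega^{-1}_{r+1}(v,z)=\Omega^{-1(v)}_{r+1}(v,z)+(r+1)\frac{h(v)}{z-v}\,\Omega_r(z,v).$$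
   Context: Two-cut hexagon: integers $b,c,d\ge1$, $m_1,m_2,n_1,n_2\ge1$ with $m_1+m_2=n_1+n_2$, $N=b+c$, $r=b-d\ge0$, $\rho=n_1-m_1+b-d\ge0$, $\Sigma=m_1-n_1+c-d\ge0$. With $(a)_k=a(a+1)\cdots(a+k-1)$, $(a)_0=1$, and $x_1=m_1+m_2-1$, $x_{c+1}=n_1-c-1$, $x_{c+d}=n_1-c-d$, $x_{c+d+1}=-c-d-1$, $y_d=m_1-d$: $Q_{\mathcal L}(z)=(z-x_{c+d+1})_b$, $Q_{\mathcal R}(z)=(z-x_1)_c$, $P_\rho(z)=(z-x_{c+d}+1)_\rho$, $P_\Sigma(z)=(z-y_d+1)_\Sigma$, and $h(u)=\frac{Q_{\mathcal R}(u)}{P_\rho(u)P_\Sigma(u)Q_{\mathcal L}(u)}$. $\mathcal L=\{-d-N,\dots,-d-c-1\}$ is the root set of $Q_{\mathcal L}$. With $\Delta_k(u)=\prod_{i<j}(u_i-u_j)$ and contours $\Gamma$ for the $u_\alpha$: $\Omega_k(v,z)=\bigl(\prod_{\alpha=1}^k\oint_\Gamma\frac{du_\alpha h(u_\alpha)}{2\pi i}\frac{z-u_\alpha}{v-u_\alpha}\bigr)\Delta_k^2(u)$, $\Omega^{\varepsilon}_k(v,z)=\bigl(\prod_{\alpha=1}^k\oint_\Gamma\frac{du_\alpha h(u_\alpha)}{2\pi i}(v-u_\alpha)^\varepsilon(z-u_\alpha)^\varepsilon\bigr)\Delta_k^2(u)$ for $\varepsilon=\pm1$ (empty products and $\Delta_0$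 equal $1$). *)

theory Defs
  imports "HOL-Complex_Analysis.Complex_Analysis"
begin

text \<open>Two-cut hexagon data. Parameters: b c d m1 m2 n1 (n2 only enters via m1+m2=n1+n2).\<close>

definition rho_tc :: "nat \<Rightarrow> nat \<Rightarrow> nat \<Rightarrow> nat \<Rightarrow> int" where
  "rho_tc b d m1 n1 = int n1 - int m1 + int b - int d"

definition Sigma_tc :: "nat \<Rightarrow> nat \<Rightarrow> nat \<Rightarrow> nat \<Rightarrow> int" where
  "Sigma_tc c d m1 n1 = int m1 - int n1 + int c - int d"

text \<open>Q_L(z) = (z - x_{c+d+1})_b with x_{c+d+1} = -c-d-1\<close>
definition QL :: "nat \<Rightarrow> nat \<Rightarrow> nat \<Rightarrow> complex \<Rightarrow> complex" where
  "QL b c d z = pochhammer (z - (- of_nat c - of_nat d - 1)) b"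

text \<open>Q_R(z) = (z - x_1)_c with x_1 = m1+m2-1\<close>
definition QR :: "nat \<Rightarrow> nat \<Rightarrow> nat \<Rightarrow> complex \<Rightarrow> complex" where
  "QR c m1 m2 z = pochhammer (z - (of_nat m1 + of_nat m2 - 1)) c"

text \<open>P_rho(z) = (z - x_{c+d} + 1)_rho with x_{c+d} = n1-c-d\<close>
definition Prho :: "nat \<Rightarrow> nat \<Rightarrow> nat \<Rightarrow> nat \<Rightarrow> nat \<Rightarrow> complex \<Rightarrow> complex" where
  "Prho b c d m1 n1 z = pochhammer (z - (of_nat n1 - of_nat c - of_nat d) + 1) (nat (rho_tc b d m1 n1))"

text \<open>P_Sigma(z) = (z - y_d + 1)_Sigma with y_d = m1-d\<close>
definition PSigma :: "nat \<Rightarrow> nat \<Rightarrow> nat \<Rightarrow> nat \<Rightarrow> complex \<Rightarrow> complex" where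
  "PSigma c d m1 n1 z = pochhammer (z - (of_nat m1 - of_nat d) + 1) (nat (Sigma_tc c d m1 n1))"

definition h_raw :: "nat \<Rightarrow> nat \<Rightarrow> nat \<Rightarrow> nat \<Rightarrow> nat \<Rightarrow> nat \<Rightarrow> complex \<Rightarrow> complex" where
  "h_raw b c d m1 m2 n1 u =
     QR c m1 m2 u / (Prho b c d m1 n1 u * PSigma c d m1 n1 u * QL b c d u)"

text \<open>h as a rational function: at zeros of the denominator (possibly cancelled
  by zeros of the numerator) take the limit, so h is the reduced rational function.\<close>
definition h_tc :: "nat \<Rightarrow> nat \<Rightarrow> nat \<Rightarrow> nat \<Rightarrow> nat \<Rightarrow> nat \<Rightarrow> complex \<Rightarrow> complex" where
  "h_tc b c d m1 m2 n1 u =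
     (if Prho b c d m1 n1 u * PSigma c d m1 n1 u * QL b c d u \<noteq> 0
      then h_raw b c d m1 m2 n1 u
      else Lim (at u) (h_raw b c d m1 m2 n1))"

definition poles_tc :: "nat \<Rightarrow> nat \<Rightarrow> nat \<Rightarrow> nat \<Rightarrow> nat \<Rightarrow> nat \<Rightarrow> complex set" where
  "poles_tc b c d m1 m2 n1 = {u. is_pole (h_tc b c d m1 m2 n1) u}"

text \<open>L = {-d-N, ..., -d-c-1}, N = b+c.\<close>
definition L_tc :: "nat \<Rightarrow> nat \<Rightarrow> nat \<Rightarrow> complex set" where
  "L_tc b c d = {of_int k | k. - int d - int b - int c \<le> k \<and> k \<le> - int d - int c - 1}"

definition Delta :: "nat \<Rightarrow> (nat \<Rightarrow> complex) \<Rightarrow> complex" where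
  "Delta k u = (\<Prod>i<k. \<Prod>j\<in>{i<..<k}. (u i - u j))"

fun iter_ci :: "(real \<Rightarrow> complex) \<Rightarrow> nat \<Rightarrow> ((nat \<Rightarrow> complex) \<Rightarrow> complex) \<Rightarrow> complex" where
  "iter_ci \<gamma> 0 F = F (\<lambda>_. 0)"
| "iter_ci \<gamma> (Suc k) F = contour_integral \<gamma> (\<lambda>w. iter_ci \<gamma> k (\<lambda>u. F (u(k := w))))"

definition Omega :: "(complex \<Rightarrow> complex) \<Rightarrow> (real \<Rightarrow> complex) \<Rightarrow> nat \<Rightarrow> complex \<Rightarrow> complex \<Rightarrow> complex" where
  "Omega h \<gamma> k v z = iter_ci \<gamma> k (\<lambda>u.
     (\<Prod>\<alpha><k. h (u \<alpha>) / (2 * pi * \<i>) * ((z - u \<alpha>) / (v - u \<alpha>))) * (Delta k u)\<^sup>2)"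

definition OmegaE :: "(complex \<Rightarrow> complex) \<Rightarrow> (real \<Rightarrow> complex) \<Rightarrow> int \<Rightarrow> nat \<Rightarrow> complex \<Rightarrow> complex \<Rightarrow> complex" where
  "OmegaE h \<gamma> \<epsilon> k v z = iter_ci \<gamma> k (\<lambda>u.
     (\<Prod>\<alpha><k. h (u \<alpha>) / (2 * pi * \<i>) * ((v - u \<alpha>) powi \<epsilon>) * ((z - u \<alpha>) powi \<epsilon>)) * (Delta k u)\<^sup>2)"

end

theory Submission
  imports Defs
begin

text \<open>Moving the contour across v changes each one-variable integral by a residue: for
  phi(w) = g(w) / (v - w) with g holomorphic near v and q entire, the integral of phi q over
  \<Gamma> equals the one over \<Gamma>(v) plus 2 pi i g(v) q(v).
  Since Delta_k(u)^2 is a finite sum of products of monomials in the separate variables, the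
  k-fold integral is multilinear in these one-variable functionals, and expanding the product
  gives one term for each set S of variables evaluated at v. Terms with |S| >= 2 vanish because
  Delta_k then has a repeated argument; the k terms with |S| = 1 agree by the symmetry of
  Delta_k^2; and setting the last variable to v turns Delta_k(u)^2 into
  prod (u_alpha - v)^2 Delta_(k-1)(u)^2, which combines with phi into the weight (v - w) g(w),
  holomorphic at v. The choices g(w) = h(w) (z - w) / (2 pi i) and g(w) = h(w) / (2 pi i (z - w))
  give the two identities.\<close>

section \<open>Iterated linear functionals\<close>

definition linear_on_entire :: "((complex \<Rightarrow> complex) \<Rightarrow> complex) \<Rightarrow> bool" where
  "linear_on_entire L \<longleftrightarrow>
     (\<forall>f g. f holomorphic_on UNIV \<longrightarrow> g holomorphic_on UNIV \<longrightarrow> L (\<lambda>w. f w + g w) = L f + L g) \<and>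
     (\<forall>c f. f holomorphic_on UNIV \<longrightarrow> L (\<lambda>w. c * f w) = c * L f)"

lemma linear_on_entire_sum:
  assumes L: "linear_on_entire L" and "finite I" and f: "\<And>i. i \<in> I \<Longrightarrow> f i holomorphic_on UNIV"
  shows "L (\<lambda>w. \<Sum>i\<in>I. c i * f i w) = (\<Sum>i\<in>I. c i * L (f i))"
  using \<open>finite I\<close> f
proof (induction I rule: finite_induct)
  case empty
  have "L (\<lambda>w. 0 * (\<lambda>_. 0) w) = 0 * L (\<lambda>_. 0)"
    using L unfolding linear_on_entire_def by (blast intro: holomorphic_on_const)
  then show ?case by simp
next
  case (insert i I)
  have "L (\<lambda>w. \<Sum>i\<in>insert i I. c i * f i w) = L (\<lambda>w. c i * f i w) + L (\<lambda>w. \<Sum>i\<in>I. c i * f i w)"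
    using L insert unfolding linear_on_entire_def by (simp add: holomorphic_intros)
  with L insert show ?case
    unfolding linear_on_entire_def by simp
qed

lemma linear_on_entire_eval: "linear_on_entire (\<lambda>g. g v)"
  unfolding linear_on_entire_def by simp

lemma contour_integral_mult_weight:
  "contour_integral \<gamma> (\<lambda>w. \<omega> w * (c * q w)) = c * contour_integral \<gamma> (\<lambda>w. \<omega> w * q w)"
  by (simp add: contour_integral_integral mult.left_commute mult.assoc)

lemma linear_on_entire_contour_integral:
  assumes "valid_path \<gamma>" "open U" "path_image \<gamma> \<subseteq> U" "\<omega> holomorphic_on U"
  shows "linear_on_entire (\<lambda>q. contour_integral \<gamma> (\<lambda>w. \<omega> w * q w))"
proof -
  have "(\<lambda>w. \<omega> w * f w) contour_integrable_on \<gamma>" if "f holomorphic_on UNIV" for f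
    using assms that
    by (intro contour_integrable_holomorphic_simple[of _ U])
       (auto intro!: holomorphic_intros)
  then show ?thesis
    unfolding linear_on_entire_def
    by (simp add: distrib_left contour_integral_add contour_integral_mult_weight)
qed

fun iter_functional ::
  "(nat \<Rightarrow> (complex \<Rightarrow> complex) \<Rightarrow> complex) \<Rightarrow> nat \<Rightarrow> ((nat \<Rightarrow> complex) \<Rightarrow> complex) \<Rightarrow> complex" where
  "iter_functional L 0 F = F (\<lambda>_. 0)"
| "iter_functional L (Suc k) F = L k (\<lambda>w. iter_functional L k (\<lambda>u. F (u(k := w))))"

lemma iter_functional_sum_prod:
  assumes "finite I" "\<And>\<alpha>. \<alpha> < k \<Longrightarrow> linear_on_entire (L \<alpha>)"
    and "\<And>i \<alpha>. i \<in> I \<Longrightarrow> \<alpha> < k \<Longrightarrow> f i \<alpha> holomorphic_on UNIV"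
  shows "iter_functional L k (\<lambda>u. \<Sum>i\<in>I. c i * (\<Prod>\<alpha><k. f i \<alpha> (u \<alpha>)))
       = (\<Sum>i\<in>I. c i * (\<Prod>\<alpha><k. L \<alpha> (f i \<alpha>)))"
  using assms(2,3)
proof (induction k arbitrary: c)
  case 0
  then show ?case by simp
next
  case (Suc k)
  have "iter_functional L k (\<lambda>u. \<Sum>i\<in>I. c i * ((\<Prod>\<alpha><k. f i \<alpha> (u \<alpha>)) * f i k w))
      = (\<Sum>i\<in>I. (c i * (\<Prod>\<alpha><k. L \<alpha> (f i \<alpha>))) * f i k w)" for w
  proof -
    have reorder: "(\<lambda>u. \<Sum>i\<in>I. c i * ((\<Prod>\<alpha><k. f i \<alpha> (u \<alpha>)) * f i k w))
        = (\<lambda>u. \<Sum>i\<in>I. (c i * f i k w) * (\<Prod>\<alpha><k. f i \<alpha> (u \<alpha>)))"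
      by (simp add: mult_ac)
    have "iter_functional L k (\<lambda>u. \<Sum>i\<in>I. (c i * f i k w) * (\<Prod>\<alpha><k. f i \<alpha> (u \<alpha>)))
        = (\<Sum>i\<in>I. (c i * f i k w) * (\<Prod>\<alpha><k. L \<alpha> (f i \<alpha>)))"
      by (rule Suc.IH) (use Suc.prems in auto)
    then show ?thesis unfolding reorder by (simp add: mult_ac)
  qed
  then have "iter_functional L (Suc k) (\<lambda>u. \<Sum>i\<in>I. c i * (\<Prod>\<alpha><Suc k. f i \<alpha> (u \<alpha>)))
      = L k (\<lambda>w. \<Sum>i\<in>I. (c i * (\<Prod>\<alpha><k. L \<alpha> (f i \<alpha>))) * f i k w)"
    by simp
  also have "\<dots> = (\<Sum>i\<in>I. (c i * (\<Prod>\<alpha><k. L \<alpha> (f i \<alpha>))) * L k (f i k))"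
    using Suc.prems \<open>finite I\<close> by (intro linear_on_entire_sum) auto
  finally show ?case by (simp add: mult_ac)
qed

lemma iter_functional_zero:
  "(\<And>\<alpha>. \<alpha> < k \<Longrightarrow> linear_on_entire (L \<alpha>)) \<Longrightarrow> iter_functional L k (\<lambda>u. 0) = 0"
  using iter_functional_sum_prod[of "{} :: nat set" k L] by simp

lemma iter_functional_cmult:
  assumes "\<And>\<alpha> c f. \<alpha> < k \<Longrightarrow> L \<alpha> (\<lambda>w. c * f w) = c * L \<alpha> f"
  shows "iter_functional L k (\<lambda>u. c * F u) = c * iter_functional L k F"
  using assms by (induction k arbitrary: F) simp_all

lemma iter_ci_weight:
  "iter_ci \<gamma> k (\<lambda>u. (\<Prod>\<alpha><k. \<omega> (u \<alpha>)) * G u)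
   = iter_functional (\<lambda>_ q. contour_integral \<gamma> (\<lambda>w. \<omega> w * q w)) k G"
proof (induction k arbitrary: G)
  case 0
  then show ?case by simp
next
  case (Suc k)
  have "iter_ci \<gamma> (Suc k) (\<lambda>u. (\<Prod>\<alpha><Suc k. \<omega> (u \<alpha>)) * G u)
      = contour_integral \<gamma> (\<lambda>w. iter_ci \<gamma> k (\<lambda>u. (\<Prod>\<alpha><k. \<omega> (u \<alpha>)) * (\<omega> w * G (u(k := w)))))"
    by (simp add: mult_ac)
  also have "\<dots> = contour_integral \<gamma> (\<lambda>w. \<omega> w *
      iter_functional (\<lambda>_ q. contour_integral \<gamma> (\<lambda>w. \<omega> w * q w)) k (\<lambda>u. G (u(k := w))))"
    by (simp add: Suc iter_functional_cmult contour_integral_mult_weight)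
  finally show ?case by simp
qed

lemma Omega_eq_iter_functional:
  "Omega H \<gamma> k v z = iter_functional
     (\<lambda>_ q. contour_integral \<gamma> (\<lambda>w. H w / (2 * pi * \<i>) * ((z - w) / (v - w)) * q w)) k
     (\<lambda>u. (Delta k u)\<^sup>2)"
  unfolding Omega_def by (rule iter_ci_weight)

lemma OmegaE_eq_iter_functional:
  "OmegaE H \<gamma> \<epsilon> k v z = iter_functional
     (\<lambda>_ q. contour_integral \<gamma> (\<lambda>w. H w / (2 * pi * \<i>) * (v - w) powi \<epsilon> * (z - w) powi \<epsilon> * q w)) k
     (\<lambda>u. (Delta k u)\<^sup>2)"
  unfolding OmegaE_def by (rule iter_ci_weight)

section \<open>The squared Vandermonde product\<close>

definition vandermonde_pairs :: "nat \<Rightarrow> (nat \<times> nat) set" where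
  "vandermonde_pairs k = {(i, j). i < j \<and> j < k}"

lemma finite_vandermonde_pairs: "finite (vandermonde_pairs k)"
  unfolding vandermonde_pairs_def
  by (rule finite_subset[of _ "{..<k} \<times> {..<k}"]) auto

lemma Delta_eq_prod_pairs: "Delta k u = (\<Prod>p\<in>vandermonde_pairs k. u (fst p) - u (snd p))"
proof -
  have "vandermonde_pairs k = Sigma {..<k} (\<lambda>i. {i<..<k})"
    unfolding vandermonde_pairs_def by auto
  then show ?thesis
    unfolding Delta_def by (simp add: prod.Sigma case_prod_beta)
qed

lemma Delta_eq_0:
  assumes "i < k" "j < k" "i \<noteq> j" "u i = u j"
  shows "Delta k u = 0"
proof -
  have "(min i j, max i j) \<in> vandermonde_pairs k"
    using assms unfolding vandermonde_pairs_def by auto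
  moreover have "u (min i j) = u (max i j)"
    using assms by (simp add: min_def max_def)
  ultimately show ?thesis
    unfolding Delta_eq_prod_pairs
    by (intro prod_zero finite_vandermonde_pairs bexI[of _ "(min i j, max i j)"]) auto
qed

lemma Delta_sq_eq_prod_off_diagonal:
  "(Delta k u)\<^sup>2 = (-1) ^ card (vandermonde_pairs k) *
     (\<Prod>p\<in>{(i, j). i < k \<and> j < k \<and> i \<noteq> j}. u (fst p) - u (snd p))"
proof -
  let ?P = "vandermonde_pairs k" and ?flip = "\<lambda>(i, j). (j, i)"
  have split: "{(i, j). i < k \<and> j < k \<and> i \<noteq> j} = ?P \<union> ?flip ` ?P"
    and disjoint: "?P \<inter> ?flip ` ?P = {}"
    unfolding vandermonde_pairs_def by auto
  have "(\<Prod>p\<in>?flip ` ?P. u (fst p) - u (snd p)) = (\<Prod>p\<in>?P. (-1) * (u (fst p) - u (snd p)))"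
    by (subst prod.reindex) (auto simp: inj_on_def intro!: prod.cong)
  also have "\<dots> = (-1) ^ card ?P * Delta k u"
    unfolding Delta_eq_prod_pairs prod.distrib by simp
  finally show ?thesis
    unfolding split Delta_eq_prod_pairs
    by (simp add: prod.union_disjoint[OF finite_vandermonde_pairs _ disjoint] finite_vandermonde_pairs
        power2_eq_square mult_ac)
qed

lemma Delta_sq_involution:
  assumes "\<And>\<alpha>. \<alpha> < k \<Longrightarrow> \<sigma> \<alpha> < k" "\<And>\<alpha>. \<sigma> (\<sigma> \<alpha>) = \<alpha>"
  shows "(Delta k (u \<circ> \<sigma>))\<^sup>2 = (Delta k u)\<^sup>2"
proof -
  let ?Q = "{(i, j). i < k \<and> j < k \<and> i \<noteq> j}"
  have "bij_betw (map_prod \<sigma> \<sigma>) ?Q ?Q"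
    by (rule bij_betwI[where g = "map_prod \<sigma> \<sigma>"]) (use assms in \<open>auto, metis+\<close>)
  from prod.reindex_bij_betw[OF this, of "\<lambda>p. u (fst p) - u (snd p)"]
  show ?thesis
    unfolding Delta_sq_eq_prod_off_diagonal by (simp add: case_prod_beta)
qed

lemma Delta_Suc: "Delta (Suc m) u = Delta m u * (\<Prod>i<m. u i - u m)"
proof -
  have "{m<..<Suc m} = {}"
    by auto
  then have "Delta (Suc m) u = (\<Prod>i<m. \<Prod>j\<in>{i<..<Suc m}. u i - u j)"
    unfolding Delta_def by simp
  also have "\<dots> = (\<Prod>i<m. (u i - u m) * (\<Prod>j\<in>{i<..<m}. u i - u j))"
  proof (rule prod.cong)
    fix i assume "i \<in> {..<m}"
    then have "{i<..<Suc m} = insert m {i<..<m}"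
      by auto
    then show "(\<Prod>j\<in>{i<..<Suc m}. u i - u j) = (u i - u m) * (\<Prod>j\<in>{i<..<m}. u i - u j)"
      by simp
  qed simp
  finally show ?thesis
    unfolding Delta_def by (simp add: prod.distrib mult_ac)
qed

lemma Delta_fun_upd_last: "Delta m (u(m := v)) = Delta m u"
  unfolding Delta_def by (intro prod.cong) auto

lemma Delta_sq_update_last:
  "(Delta (Suc m) (u(m := v)))\<^sup>2 = (\<Prod>\<alpha><m. (u \<alpha> - v)\<^sup>2) * (Delta m u)\<^sup>2"
  by (simp add: Delta_Suc Delta_fun_upd_last power_mult_distrib prod_power_distrib)

text \<open>Expanding each factor (u i - u j)^2 = u i^2 - 2 u i u j + u j^2 of the squared Vandermonde
  product, a term of the product chooses for every pair p the exponent t p \<in> {0, 1, 2} of its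
  second variable.\<close>
definition Delta_sq_choices :: "nat \<Rightarrow> (nat \<times> nat \<Rightarrow> nat) set" where
  "Delta_sq_choices k = PiE (vandermonde_pairs k) (\<lambda>_. {0, 1, 2})"

definition Delta_sq_coeff :: "nat \<Rightarrow> (nat \<times> nat \<Rightarrow> nat) \<Rightarrow> complex" where
  "Delta_sq_coeff k t = (\<Prod>p\<in>vandermonde_pairs k. if t p = 1 then -2 else 1)"

definition Delta_sq_degree :: "nat \<Rightarrow> (nat \<times> nat \<Rightarrow> nat) \<Rightarrow> nat \<Rightarrow> nat" where
  "Delta_sq_degree k t \<alpha> =
     (\<Sum>p\<in>vandermonde_pairs k. (if \<alpha> = fst p then 2 - t p else 0) + (if \<alpha> = snd p then t p else 0))"

lemma finite_Delta_sq_choices: "finite (Delta_sq_choices k)"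
  unfolding Delta_sq_choices_def by (simp add: finite_PiE finite_vandermonde_pairs)

lemma Delta_sq_expansion:
  "(Delta k u)\<^sup>2 = (\<Sum>t\<in>Delta_sq_choices k. Delta_sq_coeff k t * (\<Prod>\<alpha><k. u \<alpha> ^ Delta_sq_degree k t \<alpha>))"
proof -
  define e where "e p s \<alpha> = (if \<alpha> = fst p then 2 - s else 0) + (if \<alpha> = snd p then s else 0)"
    for p :: "nat \<times> nat" and s \<alpha> :: nat
  have factor: "(u (fst p) - u (snd p))\<^sup>2
      = (\<Sum>s\<in>{0, 1, 2}. (if s = 1 then -2 else 1) * (\<Prod>\<alpha><k. u \<alpha> ^ e p s \<alpha>))"
    if "p \<in> vandermonde_pairs k" for p
  proof -
    have "fst p < k" "snd p < k" "fst p \<noteq> snd p"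
      using that unfolding vandermonde_pairs_def by auto
    then have "(\<Prod>\<alpha><k. u \<alpha> ^ e p s \<alpha>) = u (fst p) ^ (2 - s) * u (snd p) ^ s" for s
      unfolding e_def power_add prod.distrib
      by (simp add: if_distrib[where f = "power (u _)"] prod.delta cong: if_cong)
    then show ?thesis
      by (simp add: power2_eq_square algebra_simps)
  qed
  have "(Delta k u)\<^sup>2 = (\<Prod>p\<in>vandermonde_pairs k. (u (fst p) - u (snd p))\<^sup>2)"
    unfolding Delta_eq_prod_pairs by (simp add: prod_power_distrib)
  also have "\<dots> = (\<Prod>p\<in>vandermonde_pairs k.
      \<Sum>s\<in>{0, 1, 2}. (if s = 1 then -2 else 1) * (\<Prod>\<alpha><k. u \<alpha> ^ e p s \<alpha>))"
    using factor by (rule prod.cong[OF refl])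
  also have "\<dots> = (\<Sum>t\<in>Delta_sq_choices k. \<Prod>p\<in>vandermonde_pairs k.
      (if t p = 1 then -2 else 1) * (\<Prod>\<alpha><k. u \<alpha> ^ e p (t p) \<alpha>))"
    unfolding Delta_sq_choices_def by (rule prod_sum_PiE) (auto simp: finite_vandermonde_pairs)
  also have "\<dots> = (\<Sum>t\<in>Delta_sq_choices k. Delta_sq_coeff k t * (\<Prod>\<alpha><k. u \<alpha> ^ Delta_sq_degree k t \<alpha>))"
    unfolding Delta_sq_coeff_def Delta_sq_degree_def power_sum e_def
    by (simp add: prod.distrib prod.swap[of _ "vandermonde_pairs k" "{..<k}"])
  finally show ?thesis .
qed

section \<open>Evaluating variables of the iterated functional at a point\<close>

lemma iter_functional_cong:
  "(\<And>\<alpha>. \<alpha> < k \<Longrightarrow> L \<alpha> = L' \<alpha>) \<Longrightarrow> iter_functional L k F = iter_functional L' k F"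
  by (induction k arbitrary: F) auto

lemma iter_functional_Delta_sq:
  assumes "\<And>\<alpha>. \<alpha> < k \<Longrightarrow> linear_on_entire (L \<alpha>)"
  shows "iter_functional L k (\<lambda>u. (Delta k u)\<^sup>2)
       = (\<Sum>t\<in>Delta_sq_choices k. Delta_sq_coeff k t * (\<Prod>\<alpha><k. L \<alpha> (\<lambda>y. y ^ Delta_sq_degree k t \<alpha>)))"
  unfolding Delta_sq_expansion using assms
  by (intro iter_functional_sum_prod[where f = "\<lambda>t \<alpha> y. y ^ Delta_sq_degree k t \<alpha>"] finite_Delta_sq_choices)
     (auto intro!: holomorphic_intros)

lemma iter_functional_Delta_sq_involution:
  assumes lin: "\<And>\<alpha>. \<alpha> < k \<Longrightarrow> linear_on_entire (L \<alpha>)"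
    and \<sigma>: "\<And>\<alpha>. \<alpha> < k \<Longrightarrow> \<sigma> \<alpha> < k" "\<And>\<alpha>. \<sigma> (\<sigma> \<alpha>) = \<alpha>"
  shows "iter_functional (\<lambda>\<alpha>. L (\<sigma> \<alpha>)) k (\<lambda>u. (Delta k u)\<^sup>2) = iter_functional L k (\<lambda>u. (Delta k u)\<^sup>2)"
proof -
  have "bij_betw \<sigma> {..<k} {..<k}"
    by (rule bij_betwI[where g = \<sigma>]) (use \<sigma> in auto)
  then have reindex: "(\<Prod>\<alpha><k. g (\<sigma> \<alpha>)) = (\<Prod>\<alpha><k. g \<alpha>)" for g :: "nat \<Rightarrow> complex"
    by (rule prod.reindex_bij_betw)
  let ?c = "Delta_sq_coeff k" and ?d = "Delta_sq_degree k"
  have "iter_functional (\<lambda>\<alpha>. L (\<sigma> \<alpha>)) k (\<lambda>u. (Delta k u)\<^sup>2)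
      = (\<Sum>t\<in>Delta_sq_choices k. ?c t * (\<Prod>\<alpha><k. L (\<sigma> \<alpha>) (\<lambda>y. y ^ ?d t \<alpha>)))"
    using lin \<sigma> by (intro iter_functional_Delta_sq) auto
  also have "\<dots> = (\<Sum>t\<in>Delta_sq_choices k. ?c t * (\<Prod>\<alpha><k. L \<alpha> (\<lambda>y. y ^ ?d t (\<sigma> \<alpha>))))"
    using reindex[of "\<lambda>\<alpha>. L \<alpha> (\<lambda>y. y ^ ?d t (\<sigma> \<alpha>))" for t] by (simp add: \<sigma>)
  also have "\<dots> = iter_functional L k (\<lambda>u. \<Sum>t\<in>Delta_sq_choices k. ?c t * (\<Prod>\<alpha><k. u \<alpha> ^ ?d t (\<sigma> \<alpha>)))"
    using lin
    by (intro iter_functional_sum_prod[where f = "\<lambda>t \<alpha> y. y ^ ?d t (\<sigma> \<alpha>)", symmetric]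
        finite_Delta_sq_choices) (auto intro!: holomorphic_intros)
  also have "(\<lambda>u. \<Sum>t\<in>Delta_sq_choices k. ?c t * (\<Prod>\<alpha><k. u \<alpha> ^ ?d t (\<sigma> \<alpha>))) = (\<lambda>u. (Delta k (u \<circ> \<sigma>))\<^sup>2)"
    unfolding Delta_sq_expansion
    using reindex[of "\<lambda>\<alpha>. u (\<sigma> \<alpha>) ^ ?d t (\<sigma> \<alpha>)" for u t] by (simp add: \<sigma>)
  also have "\<dots> = (\<lambda>u. (Delta k u)\<^sup>2)"
    using Delta_sq_involution[OF \<sigma>] by simp
  finally show ?thesis .
qed

lemma iter_functional_Delta_sq_eval_twice:
  assumes lin: "\<And>\<alpha>. \<alpha> < k \<Longrightarrow> linear_on_entire (L \<alpha>)"
    and eval: "\<And>\<alpha>. \<alpha> \<in> S \<Longrightarrow> L \<alpha> = (\<lambda>g. g v)"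
    and "i \<in> S" "j \<in> S" "i \<noteq> j" "i < k" "j < k"
  shows "iter_functional L k (\<lambda>u. (Delta k u)\<^sup>2) = 0"
proof -
  let ?c = "Delta_sq_coeff k" and ?d = "Delta_sq_degree k"
  define fix_S where "fix_S u \<alpha> = (if \<alpha> \<in> S then v else u \<alpha>)" for u :: "nat \<Rightarrow> complex" and \<alpha>
  have "iter_functional L k (\<lambda>u. (Delta k u)\<^sup>2)
      = (\<Sum>t\<in>Delta_sq_choices k. ?c t * (\<Prod>\<alpha><k. L \<alpha> (\<lambda>y. y ^ ?d t \<alpha>)))"
    by (rule iter_functional_Delta_sq[OF lin])
  also have "\<dots> = (\<Sum>t\<in>Delta_sq_choices k. ?c t * (\<Prod>\<alpha><k. L \<alpha> (\<lambda>y. fix_S (\<lambda>_. y) \<alpha> ^ ?d t \<alpha>)))"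
  proof -
    have "L \<alpha> (\<lambda>y. fix_S (\<lambda>_. y) \<alpha> ^ n) = L \<alpha> (\<lambda>y. y ^ n)" for \<alpha> n
      by (cases "\<alpha> \<in> S") (simp_all add: eval fix_S_def)
    then show ?thesis by simp
  qed
  also have "\<dots> = iter_functional L k (\<lambda>u. \<Sum>t\<in>Delta_sq_choices k. ?c t * (\<Prod>\<alpha><k. fix_S u \<alpha> ^ ?d t \<alpha>))"
  proof -
    have "(\<lambda>y. fix_S (\<lambda>_. y) \<alpha> ^ n) holomorphic_on UNIV" for \<alpha> n
      by (cases "\<alpha> \<in> S") (simp_all add: fix_S_def holomorphic_intros)
    moreover have "fix_S (\<lambda>_. u \<alpha>) \<alpha> = fix_S u \<alpha>" for u \<alpha>
      by (simp add: fix_S_def)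
    ultimately show ?thesis
      using lin iter_functional_sum_prod[where f = "\<lambda>t \<alpha> y. fix_S (\<lambda>_. y) \<alpha> ^ ?d t \<alpha>" and L = L]
      by (simp add: finite_Delta_sq_choices)
  qed
  also have "\<dots> = iter_functional L k (\<lambda>u. 0)"
    unfolding Delta_sq_expansion[symmetric]
    using assms by (subst Delta_eq_0[of i k j]) (auto simp: fix_S_def)
  finally show ?thesis
    using iter_functional_zero[OF lin] by simp
qed

lemma iter_functional_Delta_sq_eval_last:
  assumes linA: "linear_on_entire A" and linB: "linear_on_entire B"
    and AB: "\<And>q. q holomorphic_on UNIV \<Longrightarrow> A (\<lambda>w. (w - v)\<^sup>2 * q w) = B q"
  shows "iter_functional (\<lambda>\<alpha>. if \<alpha> = m then (\<lambda>g. g v) else A) (Suc m) (\<lambda>u. (Delta (Suc m) u)\<^sup>2)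
       = iter_functional (\<lambda>_. B) m (\<lambda>u. (Delta m u)\<^sup>2)"
proof -
  let ?c = "Delta_sq_coeff m" and ?d = "Delta_sq_degree m"
  have "iter_functional (\<lambda>\<alpha>. if \<alpha> = m then (\<lambda>g. g v) else A) (Suc m) (\<lambda>u. (Delta (Suc m) u)\<^sup>2)
      = iter_functional (\<lambda>_. A) m (\<lambda>u. (Delta (Suc m) (u(m := v)))\<^sup>2)"
    by (simp cong: iter_functional_cong)
  also have "(\<lambda>u. (Delta (Suc m) (u(m := v)))\<^sup>2)
      = (\<lambda>u. \<Sum>t\<in>Delta_sq_choices m. ?c t * (\<Prod>\<alpha><m. (u \<alpha> - v)\<^sup>2 * u \<alpha> ^ ?d t \<alpha>))"
    unfolding Delta_sq_update_last Delta_sq_expansion[of m]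
    by (simp add: sum_distrib_left prod.distrib mult.left_commute)
  also have "iter_functional (\<lambda>_. A) m \<dots>
      = (\<Sum>t\<in>Delta_sq_choices m. ?c t * (\<Prod>\<alpha><m. A (\<lambda>w. (w - v)\<^sup>2 * w ^ ?d t \<alpha>)))"
    using linA
    by (intro iter_functional_sum_prod[where f = "\<lambda>t \<alpha> w. (w - v)\<^sup>2 * w ^ ?d t \<alpha>"]
        finite_Delta_sq_choices) (auto intro!: holomorphic_intros)
  also have "\<dots> = (\<Sum>t\<in>Delta_sq_choices m. ?c t * (\<Prod>\<alpha><m. B (\<lambda>w. w ^ ?d t \<alpha>)))"
    by (simp add: AB holomorphic_intros)
  also have "\<dots> = iter_functional (\<lambda>_. B) m (\<lambda>u. (Delta m u)\<^sup>2)"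
    using linB by (simp add: iter_functional_Delta_sq)
  finally show ?thesis .
qed

lemma iter_functional_Delta_sq_subset_sum:
  assumes linA: "linear_on_entire A" and L: "\<And>q. q holomorphic_on UNIV \<Longrightarrow> L q = A q + K * q v"
  shows "iter_functional (\<lambda>_. L) k (\<lambda>u. (Delta k u)\<^sup>2)
       = (\<Sum>S\<in>Pow {..<k}. K ^ card S *
            iter_functional (\<lambda>\<alpha>. if \<alpha> \<in> S then (\<lambda>g. g v) else A) k (\<lambda>u. (Delta k u)\<^sup>2))"
proof -
  let ?c = "Delta_sq_coeff k" and ?d = "Delta_sq_degree k"
  let ?M = "\<lambda>S (\<alpha> :: nat). if \<alpha> \<in> S then (\<lambda>g. g v) else A"
  have linL: "linear_on_entire L"
    using linA unfolding linear_on_entire_def by (simp add: L holomorphic_intros distrib_left)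
  have linM: "linear_on_entire (?M S \<alpha>)" for S \<alpha>
    using linA linear_on_entire_eval by simp
  have "iter_functional (\<lambda>_. L) k (\<lambda>u. (Delta k u)\<^sup>2)
      = (\<Sum>t\<in>Delta_sq_choices k. ?c t * (\<Prod>\<alpha><k. K * v ^ ?d t \<alpha> + A (\<lambda>y. y ^ ?d t \<alpha>)))"
    using linL by (simp add: iter_functional_Delta_sq L holomorphic_intros add.commute)
  also have "\<dots> = (\<Sum>t\<in>Delta_sq_choices k. \<Sum>S\<in>Pow {..<k}.
      ?c t * (K ^ card S * (\<Prod>\<alpha><k. ?M S \<alpha> (\<lambda>y. y ^ ?d t \<alpha>))))"
  proof (intro sum.cong refl, unfold prod_add[OF finite_lessThan] sum_distrib_left, intro sum.cong refl)
    fix t S assume "S \<in> Pow {..<k}"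
    then have "(\<Prod>\<alpha><k. ?M S \<alpha> (\<lambda>y. y ^ ?d t \<alpha>))
        = (\<Prod>\<alpha>\<in>S. v ^ ?d t \<alpha>) * (\<Prod>\<alpha>\<in>{..<k} - S. A (\<lambda>y. y ^ ?d t \<alpha>))"
      by (simp add: if_distrib[of "\<lambda>F. F _"] prod.If_cases Int_absorb1 Diff_eq)
    then show "?c t * ((\<Prod>\<alpha>\<in>S. K * v ^ ?d t \<alpha>) * (\<Prod>\<alpha>\<in>{..<k} - S. A (\<lambda>y. y ^ ?d t \<alpha>)))
        = ?c t * (K ^ card S * (\<Prod>\<alpha><k. ?M S \<alpha> (\<lambda>y. y ^ ?d t \<alpha>)))"
      by (simp add: prod.distrib mult_ac)
  qed
  also have "\<dots> = (\<Sum>S\<in>Pow {..<k}. K ^ card S * iter_functional (?M S) k (\<lambda>u. (Delta k u)\<^sup>2))"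
    by (subst sum.swap) (simp add: iter_functional_Delta_sq linM sum_distrib_left mult.left_commute)
  finally show ?thesis .
qed

lemma iter_functional_Delta_sq_point_perturbation:
  assumes linA: "linear_on_entire A" and linB: "linear_on_entire B"
    and L: "\<And>q. q holomorphic_on UNIV \<Longrightarrow> L q = A q + K * q v"
    and AB: "\<And>q. q holomorphic_on UNIV \<Longrightarrow> A (\<lambda>w. (w - v)\<^sup>2 * q w) = B q"
  shows "iter_functional (\<lambda>_. L) (Suc m) (\<lambda>u. (Delta (Suc m) u)\<^sup>2)
       = iter_functional (\<lambda>_. A) (Suc m) (\<lambda>u. (Delta (Suc m) u)\<^sup>2)
         + of_nat (Suc m) * K * iter_functional (\<lambda>_. B) m (\<lambda>u. (Delta m u)\<^sup>2)"
proof -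
  define k where "k = Suc m"
  let ?M = "\<lambda>S (\<alpha> :: nat). if \<alpha> \<in> S then (\<lambda>g. g v) else A"
  let ?W = "\<lambda>S. iter_functional (?M S) k (\<lambda>u. (Delta k u)\<^sup>2)"
  have linM: "linear_on_entire (?M S \<alpha>)" for S \<alpha>
    using linA linear_on_entire_eval by simp
  have vanish: "K ^ card S * ?W S = 0" if S: "S \<in> Pow {..<k} - insert {} ((\<lambda>\<beta>. {\<beta>}) ` {..<k})" for S
  proof -
    obtain i j where "i \<in> S" "j \<in> S" "i \<noteq> j"
      using S by blast
    with S show ?thesis
      by (auto intro!: iter_functional_Delta_sq_eval_twice[where S = S and i = i and j = j] linM)
  qed
  have swap: "?W {\<beta>} = ?W {m}" if "\<beta> < k" for \<beta>
  proof -
    define \<sigma> where "\<sigma> \<alpha> = (if \<alpha> = \<beta> then m else if \<alpha> = m then \<beta> else \<alpha>)" for \<alpha>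
    have "?M {\<beta>} = (\<lambda>\<alpha>. ?M {m} (\<sigma> \<alpha>))"
      by (auto simp: \<sigma>_def)
    moreover have "iter_functional (\<lambda>\<alpha>. ?M {m} (\<sigma> \<alpha>)) k (\<lambda>u. (Delta k u)\<^sup>2) = ?W {m}"
      using that by (intro iter_functional_Delta_sq_involution linM) (auto simp: \<sigma>_def k_def)
    ultimately show ?thesis
      by simp
  qed
  have "iter_functional (\<lambda>_. L) k (\<lambda>u. (Delta k u)\<^sup>2) = (\<Sum>S\<in>Pow {..<k}. K ^ card S * ?W S)"
    using iter_functional_Delta_sq_subset_sum[OF linA L] .
  also have "\<dots> = (\<Sum>S\<in>insert {} ((\<lambda>\<beta>. {\<beta>}) ` {..<k}). K ^ card S * ?W S)"
    using vanish by (intro sum.mono_neutral_right) auto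
  also have "\<dots> = ?W {} + (\<Sum>\<beta><k. K * ?W {\<beta>})"
    by (subst sum.insert) (auto simp: sum.reindex)
  also have "\<dots> = ?W {} + of_nat k * K * ?W {m}"
    using swap by simp
  also have "?W {m} = iter_functional (\<lambda>_. B) m (\<lambda>u. (Delta m u)\<^sup>2)"
    using iter_functional_Delta_sq_eval_last[OF linA linB AB] by (simp add: k_def)
  finally show ?thesis
    by (simp add: k_def)
qed

section \<open>Poles of the weight\<close>

context
  fixes N D f :: "complex \<Rightarrow> complex"
  assumes N: "N holomorphic_on UNIV" and D: "D holomorphic_on UNIV" and zeros: "finite {u. D u = 0}"
    and f: "\<And>u. f u = (if D u \<noteq> 0 then N u / D u else Lim (at u) (\<lambda>w. N w / D w))"
begin

lemma reduced_quotient_eventually_eq: "eventually (\<lambda>w. f w = N w / D w) (at u)"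
proof -
  have "eventually (\<lambda>w. w \<notin> {u. D u = 0}) (at u)"
    using islimpt_finite[OF zeros] by (simp add: islimpt_iff_eventually)
  then show ?thesis
    by eventually_elim (simp add: f)
qed

lemma is_pole_reduced_quotient_iff: "is_pole f u \<longleftrightarrow> is_pole (\<lambda>w. N w / D w) u"
  using reduced_quotient_eventually_eq by (intro is_pole_cong) auto

lemma holomorphic_quotient_off_zeros: "(\<lambda>w. N w / D w) holomorphic_on - {u. D u = 0}"
  using N D by (auto intro!: holomorphic_intros)

lemma reduced_quotient_poles_subset: "{u. is_pole f u} \<subseteq> {u. D u = 0}"
proof -
  have "open (- {u. D u = 0})"
    using zeros by (simp add: finite_imp_closed open_Compl)
  then show ?thesis
    using not_is_pole_holomorphic holomorphic_quotient_off_zeros is_pole_reduced_quotient_iff by blast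
qed

lemma finite_reduced_quotient_poles: "finite {u. is_pole f u}"
  using reduced_quotient_poles_subset zeros by (rule finite_subset)

lemma holomorphic_reduced_quotient: "f holomorphic_on - {u. is_pole f u}"
proof (rule no_isolated_singularity'[where K = "{u. D u = 0} - {u. is_pole f u}"])
  show "open (- {u. is_pole f u})"
    using finite_reduced_quotient_poles by (simp add: finite_imp_closed open_Compl)
  show "finite ({u. D u = 0} - {u. is_pole f u})"
    using zeros by simp
  have "f holomorphic_on - {u. D u = 0}"
    using holomorphic_quotient_off_zeros by (rule holomorphic_transform) (simp add: f)
  moreover have "- {u. is_pole f u} - ({u. D u = 0} - {u. is_pole f u}) = - {u. D u = 0}"
    using reduced_quotient_poles_subset by auto
  ultimately show "f holomorphic_on - {u. is_pole f u} - ({u. D u = 0} - {u. is_pole f u})"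
    by simp
next
  fix z assume z: "z \<in> {u. D u = 0} - {u. is_pole f u}"
  have "not_essential (\<lambda>w. N w / D w) z"
    using N D
    by (intro not_essential_divide not_essential_holomorphic isolated_singularity_at_holomorphic[of _ UNIV])
       (auto)
  moreover have "\<not> is_pole (\<lambda>w. N w / D w) z"
    using z is_pole_reduced_quotient_iff by auto
  ultimately obtain c where c: "(\<lambda>w. N w / D w) \<midarrow>z\<rightarrow> c"
    unfolding not_essential_def by auto
  then have "f z = c"
    using f[of z] z by (simp add: tendsto_Lim)
  moreover have "f \<midarrow>z\<rightarrow> c"
    using c reduced_quotient_eventually_eq[of z] by (simp add: tendsto_cong)
  ultimately show "(f \<longlongrightarrow> f z) (at z within - {u. is_pole f u})"
    by (auto intro: tendsto_mono[OF at_le])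
qed
end

lemma finite_pochhammer_zeros: "finite {u :: complex. pochhammer (u + a) n = 0}"
proof -
  have "{u :: complex. pochhammer (u + a) n = 0} \<subseteq> (\<lambda>k. - of_nat k - a) ` {..<n}"
    by (auto simp: pochhammer_eq_0_iff algebra_simps)
  then show ?thesis
    by (rule finite_subset) simp
qed

lemma holomorphic_on_pochhammer [holomorphic_intros]:
  "g holomorphic_on S \<Longrightarrow> (\<lambda>u. pochhammer (g u :: complex) n) holomorphic_on S"
  unfolding pochhammer_prod by (intro holomorphic_intros)

lemma h_tc_poles:
  "finite (poles_tc b c d m1 m2 n1)"
  "h_tc b c d m1 m2 n1 holomorphic_on - poles_tc b c d m1 m2 n1"
proof -
  define D where "D u = Prho b c d m1 n1 u * PSigma c d m1 n1 u * QL b c d u" for u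
  have "{u. D u = 0} \<subseteq>
      {u. pochhammer (u + (1 - (of_nat n1 - of_nat c - of_nat d))) (nat (rho_tc b d m1 n1)) = 0}
      \<union> {u. pochhammer (u + (1 - (of_nat m1 - of_nat d))) (nat (Sigma_tc c d m1 n1)) = 0}
      \<union> {u. pochhammer (u + (of_nat c + of_nat d + 1)) b = 0}"
    unfolding D_def Prho_def PSigma_def QL_def by (auto simp: algebra_simps)
  then have "finite {u. D u = 0}"
    by (rule finite_subset) (simp add: finite_pochhammer_zeros)
  note quotient = finite_reduced_quotient_poles[of "QR c m1 m2" D, OF _ _ this]
    holomorphic_reduced_quotient[of "QR c m1 m2" D, OF _ _ this]
  show "finite (poles_tc b c d m1 m2 n1)"
    "h_tc b c d m1 m2 n1 holomorphic_on - poles_tc b c d m1 m2 n1"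
    using quotient unfolding poles_tc_def h_tc_def h_raw_def D_def QR_def Prho_def PSigma_def QL_def
    by (simp_all add: holomorphic_intros)
qed

section \<open>Moving the contour across a point\<close>

lemma contour_integral_diff_eq_residues:
  assumes "finite P" "f holomorphic_on - P"
    and "valid_path \<gamma>1" "pathfinish \<gamma>1 = pathstart \<gamma>1" "path_image \<gamma>1 \<inter> P = {}"
    and "valid_path \<gamma>2" "pathfinish \<gamma>2 = pathstart \<gamma>2" "path_image \<gamma>2 \<inter> P = {}"
  shows "contour_integral \<gamma>1 f - contour_integral \<gamma>2 f
       = 2 * pi * \<i> * (\<Sum>p\<in>P. (winding_number \<gamma>1 p - winding_number \<gamma>2 p) * residue f p)"
proof -
  have "contour_integral \<gamma> f = 2 * pi * \<i> * (\<Sum>p\<in>P. winding_number \<gamma> p * residue f p)"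
    if "valid_path \<gamma>" "pathfinish \<gamma> = pathstart \<gamma>" "path_image \<gamma> \<inter> P = {}" for \<gamma>
    using assms(1,2) that
    by (intro Residue_theorem[of UNIV]) (auto simp: Compl_eq_Diff_UNIV)
  with assms show ?thesis
    by (simp add: sum_subtractf left_diff_distrib right_diff_distrib)
qed

locale contour_pair =
  fixes P :: "complex set" and v :: complex and \<gamma> \<gamma>v :: "real \<Rightarrow> complex"
  assumes finite_P: "finite P" and v_notin_P: "v \<notin> P"
    and valid: "valid_path \<gamma>" "valid_path \<gamma>v"
    and closed: "pathfinish \<gamma> = pathstart \<gamma>" "pathfinish \<gamma>v = pathstart \<gamma>v"
    and avoid: "path_image \<gamma> \<inter> insert v P = {}" "path_image \<gamma>v \<inter> insert v P = {}"
    and winding_eq: "\<And>p. p \<in> P \<Longrightarrow> winding_number \<gamma> p = winding_number \<gamma>v p"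
    and winding_v: "winding_number \<gamma> v = 0" "winding_number \<gamma>v v = 1"
begin

lemma contour_integral_eq_if_holomorphic:
  assumes "g holomorphic_on - P"
  shows "contour_integral \<gamma>v g = contour_integral \<gamma> g"
  using contour_integral_diff_eq_residues[OF finite_P assms valid(1) closed(1) _ valid(2) closed(2)]
    avoid winding_eq by auto

lemma contour_integral_simple_pole:
  assumes "g holomorphic_on - P"
  shows "contour_integral \<gamma> (\<lambda>w. g w / (v - w))
       = contour_integral \<gamma>v (\<lambda>w. g w / (v - w)) + 2 * pi * \<i> * g v"
proof -
  have pole: "(\<lambda>w. g w / (v - w)) = (\<lambda>w. - g w / (w - v))"
    by (metis minus_diff_eq minus_divide_divide)
  have "open (- P)"
    using finite_P by (simp add: finite_imp_closed open_Compl)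
  then have residue_v: "residue (\<lambda>w. g w / (v - w)) v = - g v"
    unfolding pole using assms v_notin_P by (intro residue_simple) (auto intro: holomorphic_intros)
  have "(\<lambda>w. g w / (v - w)) holomorphic_on - insert v P"
    using assms by (auto intro!: holomorphic_intros)
  from contour_integral_diff_eq_residues[OF _ this valid(1) closed(1) avoid(1) valid(2) closed(2) avoid(2)]
  show ?thesis
    using finite_P v_notin_P winding_eq winding_v residue_v
    by (simp add: algebra_simps)
qed

lemma iter_contour_integral_Delta_sq_expansion:
  assumes g: "g holomorphic_on - P"
    and \<phi>: "\<And>w. \<phi> w = g w / (v - w)" and \<psi>: "\<And>w. \<psi> w = (v - w) * g w"
  shows "iter_functional (\<lambda>_ q. contour_integral \<gamma> (\<lambda>w. \<phi> w * q w)) (Suc m) (\<lambda>u. (Delta (Suc m) u)\<^sup>2)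
       = iter_functional (\<lambda>_ q. contour_integral \<gamma>v (\<lambda>w. \<phi> w * q w)) (Suc m) (\<lambda>u. (Delta (Suc m) u)\<^sup>2)
         + of_nat (Suc m) * (2 * pi * \<i> * g v)
           * iter_functional (\<lambda>_ q. contour_integral \<gamma> (\<lambda>w. \<psi> w * q w)) m (\<lambda>u. (Delta m u)\<^sup>2)"
proof (rule iter_functional_Delta_sq_point_perturbation)
  have "open (- insert v P)" "open (- P)"
    using finite_P by (simp_all add: finite_imp_closed open_Compl)
  moreover have "\<phi> holomorphic_on - insert v P" "\<psi> holomorphic_on - P"
    unfolding \<phi> \<psi> using g by (auto intro!: holomorphic_intros)
  ultimately show "linear_on_entire (\<lambda>q. contour_integral \<gamma>v (\<lambda>w. \<phi> w * q w))"
    "linear_on_entire (\<lambda>q. contour_integral \<gamma> (\<lambda>w. \<psi> w * q w))"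
    using valid avoid by (auto intro!: linear_on_entire_contour_integral)
next
  fix q :: "complex \<Rightarrow> complex" assume q: "q holomorphic_on UNIV"
  then have gq: "(\<lambda>w. g w * q w) holomorphic_on - P"
    using g by (auto intro!: holomorphic_intros)
  show "contour_integral \<gamma> (\<lambda>w. \<phi> w * q w)
      = contour_integral \<gamma>v (\<lambda>w. \<phi> w * q w) + 2 * pi * \<i> * g v * q v"
    using contour_integral_simple_pole[OF gq] by (simp add: \<phi> field_simps)
  have "contour_integral \<gamma>v (\<lambda>w. \<phi> w * ((w - v)\<^sup>2 * q w)) = contour_integral \<gamma>v (\<lambda>w. \<psi> w * q w)"
  proof (rule contour_integral_eq)
    fix w assume "w \<in> path_image \<gamma>v"
    then have "w \<noteq> v"
      using avoid(2) by auto
    then show "\<phi> w * ((w - v)\<^sup>2 * q w) = \<psi> w * q w"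
      by (simp add: \<phi> \<psi> field_simps power2_eq_square)
  qed
  also have "\<dots> = contour_integral \<gamma> (\<lambda>w. \<psi> w * q w)"
    using gq by (intro contour_integral_eq_if_holomorphic) (simp add: \<psi> mult.assoc holomorphic_intros)
  finally show "contour_integral \<gamma>v (\<lambda>w. \<phi> w * ((w - v)\<^sup>2 * q w)) = contour_integral \<gamma> (\<lambda>w. \<psi> w * q w)" .
qed

lemma Omega_move_contour_across:
  assumes "H holomorphic_on - P"
  shows "Omega H \<gamma> (Suc m) v z
       = Omega H \<gamma>v (Suc m) v z + of_nat (Suc m) * (z - v) * H v * OmegaE H \<gamma> 1 m v z"
proof -
  define g where "g w = H w * (z - w) / (2 * pi * \<i>)" for w
  have "g holomorphic_on - P"
    unfolding g_def using assms by (auto intro!: holomorphic_intros)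
  moreover have "H w / (2 * pi * \<i>) * ((z - w) / (v - w)) = g w / (v - w)"
    and "H w / (2 * pi * \<i>) * (v - w) powi 1 * (z - w) powi 1 = (v - w) * g w" for w
    unfolding g_def by simp_all
  moreover have "2 * pi * \<i> * g v = (z - v) * H v"
    unfolding g_def by simp
  ultimately show ?thesis
    using iter_contour_integral_Delta_sq_expansion[of g _ _ m]
    unfolding Omega_eq_iter_functional OmegaE_eq_iter_functional
    by (simp only: mult.assoc)
qed

lemma OmegaE_minus_one_move_contour_across:
  assumes "H holomorphic_on - P" "z \<in> P"
  shows "OmegaE H \<gamma> (-1) (Suc k) v z
       = OmegaE H \<gamma>v (-1) (Suc k) v z + of_nat (Suc k) * H v / (z - v) * Omega H \<gamma> k z v"
proof -
  define g where "g w = H w / (2 * pi * \<i>) / (z - w)" for w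
  have "g holomorphic_on - P"
    unfolding g_def using assms by (auto intro!: holomorphic_intros)
  moreover have "H w / (2 * pi * \<i>) * (v - w) powi -1 * (z - w) powi -1 = g w / (v - w)"
    and "H w / (2 * pi * \<i>) * ((v - w) / (z - w)) = (v - w) * g w" for w
    unfolding g_def by (simp_all only: power_int_minus1_right divide_inverse mult_ac)
  moreover have "2 * pi * \<i> * g v = H v / (z - v)"
    unfolding g_def by simp
  ultimately show ?thesis
    using iter_contour_integral_Delta_sq_expansion[of g _ _ k]
    unfolding Omega_eq_iter_functional OmegaE_eq_iter_functional
    by (simp only: times_divide_eq_right)
qed

end

theorem lemma5p3:
  fixes b c d m1 m2 n1 n2 :: nat and v z :: complex and \<gamma> \<gamma>v :: "real \<Rightarrow> complex"
  assumes pos: "b \<ge> 1" "c \<ge> 1" "d \<ge> 1" "m1 \<ge> 1" "m2 \<ge> 1" "n1 \<ge> 1" "n2 \<ge> 1"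
    and sum_eq: "m1 + m2 = n1 + n2"
    and r_nonneg: "d \<le> b"
    and rho_nonneg: "rho_tc b d m1 n1 \<ge> 0"
    and Sigma_nonneg: "Sigma_tc c d m1 n1 \<ge> 0"
    and vz: "v \<noteq> z" "v \<notin> poles_tc b c d m1 m2 n1" "z \<notin> poles_tc b c d m1 m2 n1"
            "v \<notin> L_tc b c d" "z \<notin> L_tc b c d"
    and \<gamma>: "valid_path \<gamma>" "pathfinish \<gamma> = pathstart \<gamma>"
        "path_image \<gamma> \<inter> (poles_tc b c d m1 m2 n1 \<union> {v, z}) = {}"
        "\<forall>p\<in>L_tc b c d. winding_number \<gamma> p = 1"
        "winding_number \<gamma> v = 0" "winding_number \<gamma> z = 0"
        "\<forall>p\<in>poles_tc b c d m1 m2 n1 - L_tc b c d. winding_number \<gamma> p = 0"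
    and \<gamma>v: "valid_path \<gamma>v" "pathfinish \<gamma>v = pathstart \<gamma>v"
        "path_image \<gamma>v \<inter> (poles_tc b c d m1 m2 n1 \<union> {v, z}) = {}"
        "\<forall>p\<in>L_tc b c d. winding_number \<gamma>v p = 1"
        "winding_number \<gamma>v v = 1" "winding_number \<gamma>v z = 0"
        "\<forall>p\<in>poles_tc b c d m1 m2 n1 - L_tc b c d. winding_number \<gamma>v p = 0"
  shows "(Omega (h_tc b c d m1 m2 n1) \<gamma> (b - d) v z =
           Omega (h_tc b c d m1 m2 n1) \<gamma>v (b - d) v z
           + of_nat (b - d) * (z - v) * h_tc b c d m1 m2 n1 v
             * OmegaE (h_tc b c d m1 m2 n1) \<gamma> 1 (b - d - 1) v z) \<and>
         (OmegaE (h_tc b c d m1 m2 n1) \<gamma> (-1) (b - d + 1) v z =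
           OmegaE (h_tc b c d m1 m2 n1) \<gamma>v (-1) (b - d + 1) v z
           + of_nat (b - d + 1) * h_tc b c d m1 m2 n1 v / (z - v)
             * Omega (h_tc b c d m1 m2 n1) \<gamma> (b - d) z v)"
proof -
  let ?H = "h_tc b c d m1 m2 n1" and ?P = "poles_tc b c d m1 m2 n1"
  interpret contour_pair "insert z ?P" v \<gamma> \<gamma>v
    using h_tc_poles vz \<gamma> \<gamma>v by unfold_locales (auto, metis DiffI)
  have H: "?H holomorphic_on - insert z ?P"
    using h_tc_poles(2) by (rule holomorphic_on_subset) auto
  have "Omega ?H \<gamma> (b - d) v z = Omega ?H \<gamma>v (b - d) v z
      + of_nat (b - d) * (z - v) * ?H v * OmegaE ?H \<gamma> 1 (b - d - 1) v z"
    using Omega_move_contour_across[OF H] by (cases "b - d") (simp_all add: Omega_def)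
  moreover have "OmegaE ?H \<gamma> (-1) (b - d + 1) v z = OmegaE ?H \<gamma>v (-1) (b - d + 1) v z
      + of_nat (b - d + 1) * ?H v / (z - v) * Omega ?H \<gamma> (b - d) z v"
    using OmegaE_minus_one_move_contour_across[OF H insertI1] by simp
  ultimately show ?thesis ..
qed

end
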